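(* Let $M$ be the prefix matching generated by a diagonal matching rule $F$, and let $a_1\to b_1\to\cdots\to a_p\to b_p\to a_{p+1}=a_1$ be a directed cycle in $\Gamma^M$ as described in the context, with $a_i=(a_{i,0},\dots,a_{i,k})$. Then $d(a_{i,d_i-1},a_{i,d_i})=1$ for all $i$.
   Context: $G$ is a finite simple connected graph with distance $d$; $\ell(x_0,\dots,x_k)=\sum_{i=0}^{k-1}d(x_i,x_{i+1})$; sequences are elements of $I_{k,l}(G)=\{(x_0,\dots,x_k)\in V(G)^{k+1}:x_i\ne x_{i+1}\ \forall i,\ \ell=l\}$. $\Gamma$ is the directed graph on sequences with an edge $a\to b$ whenever $b$ is obtained from $a=(x_0,\dots,x_k)$ by deleting some $x_i$, $1\le i\le k-1$, with $\ell(b)=\ell(a)$. A matching is a set of pairwise vertex-disjoint edges of $\Gamma$; $\Gamma^M$ is $\Gamma$ with edges of $M$ reversed. Matching states: "unmatched", "insert$(i,v)$" (matched to $(x_0,\dots,x_i,v,x_{i+1},\dots,x_k)$), "delete$(i)$" (matched to $(x_0,\dots,\hat x_i,\dots,x_k)$). A prefix matching: whenever $(x_0,\dots,x_k)$ has state insert$(i,v)$ (resp. delete$(i)$), every sequence $(x_0,\dots,x_{i+1},y_{i+2},\dots,y_{k'})$ has the same state. A matching rule is a function $F$ from sequences to $\{\epsilon\}\cup\{\iota(v):v\in V(G)\}\cup\{\delta\}$; a prefix matching $M$ is generated by $F$ if for every sequence $(x_0,\dots,x_k)$, $k\ge1$, with unmatched prefix $(x_0,\dots,x_{k-1})$, its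 state is insert$(k-1,v)$ iff $F(x_0,\dots,x_k)=\iota(v)$ and delete$(k-1)$ iff $F(x_0,\dots,x_k)=\delta$. $F$ is valid if (1) $F(x_0,\dots,x_k)=\iota(v)$ implies $v\notin\{x_{k-1},x_k\}$, $d(x_{k-1},v)+d(v,x_k)=d(x_{k-1},x_k)$, $F(x_0,\dots,x_{k-1},v)=\epsilon$, $F(x_0,\dots,x_{k-1},v,x_k)=\delta$; (2) $F(x_0,\dots,x_k)=\delta$ implies $d(x_{k-2},x_{k-1})+d(x_{k-1},x_k)=d(x_{k-2},x_k)$ and $F(x_0,\dots,x_{k-2},x_k)=\iota(x_{k-1})$. A valid $F$ is diagonal if, w.r.t. the prefix matching it generates, $F(x_0,\dots,x_k)\ne\epsilon$ for every sequence with unmatched prefix and $d(x_{k-1},x_k)\ge2$. Cycle setting: $a_i\in I_{k,l}(G)$, $b_i\in I_{k-1,l}(G)$, each $a_i\to b_i$ is an edge of $\Gamma$ not in $M$, each $b_i\to a_{i+1}$ is a reversed edge of $M$; $d_i$ is the position of the entry of $a_i$ deleted to obtain $b_i$; $a_{i+1}=(b_{i,0},\dots,b_{i,c_i},u_i,b_{i,c_i+1},\dots,b_{i,k-1})$ where $b_i=(b_{i,0},\dots,b_{i,k-1})$; indices $i$ are taken modulo $p$. *)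

theory Defs
  imports Main
begin

definition walk :: "('v \<Rightarrow> 'v \<Rightarrow> bool) \<Rightarrow> 'v list \<Rightarrow> bool" where
  "walk E xs \<longleftrightarrow> xs \<noteq> [] \<and> (\<forall>i. i + 1 < length xs \<longrightarrow> E (xs ! i) (xs ! (i + 1)))"

definition fin_simple_connected_graph :: "'v set \<Rightarrow> ('v \<Rightarrow> 'v \<Rightarrow> bool) \<Rightarrow> bool" where
  "fin_simple_connected_graph V E \<longleftrightarrow>
     finite V \<and> V \<noteq> {} \<and>
     (\<forall>x y. E x y \<longrightarrow> x \<in> V \<and> y \<in> V) \<and>
     (\<forall>x y. E x y \<longrightarrow> E y x) \<and>
     (\<forall>x. \<not> E x x) \<and>
     (\<forall>x\<in>V. \<forall>y\<in>V. \<exists>xs. walk E xs \<and> hd xs = x \<and> last xs = y)"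

definition gdist :: "('v \<Rightarrow> 'v \<Rightarrow> bool) \<Rightarrow> 'v \<Rightarrow> 'v \<Rightarrow> nat" where
  "gdist E x y = (LEAST n. \<exists>xs. walk E xs \<and> hd xs = x \<and> last xs = y \<and> length xs = n + 1)"

definition ell :: "('v \<Rightarrow> 'v \<Rightarrow> bool) \<Rightarrow> 'v list \<Rightarrow> nat" where
  "ell E xs = (\<Sum>i<length xs - 1. gdist E (xs ! i) (xs ! (i + 1)))"

text \<open>A sequence: an element of some I_{k,l}(G), i.e. a nonempty list of vertices
  with consecutive entries distinct (k = length - 1, l = ell).\<close>
definition is_seq :: "'v set \<Rightarrow> 'v list \<Rightarrow> bool" where
  "is_seq V xs \<longleftrightarrow> xs \<noteq> [] \<and> set xs \<subseteq> V \<and>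
     (\<forall>i. i + 1 < length xs \<longrightarrow> xs ! i \<noteq> xs ! (i + 1))"

definition del_at :: "nat \<Rightarrow> 'v list \<Rightarrow> 'v list" where
  "del_at i xs = take i xs @ drop (i + 1) xs"

definition ins_after :: "nat \<Rightarrow> 'v \<Rightarrow> 'v list \<Rightarrow> 'v list" where
  "ins_after i v xs = take (i + 1) xs @ v # drop (i + 1) xs"

definition gamma_edge :: "'v set \<Rightarrow> ('v \<Rightarrow> 'v \<Rightarrow> bool) \<Rightarrow> 'v list \<Rightarrow> 'v list \<Rightarrow> bool" where
  "gamma_edge V E a b \<longleftrightarrow> is_seq V a \<and> is_seq V b \<and>
     (\<exists>i. 1 \<le> i \<and> i + 1 < length a \<and> b = del_at i a) \<and> ell E b = ell E a"

definition is_matching :: "'v set \<Rightarrow> ('v \<Rightarrow> 'v \<Rightarrow> bool) \<Rightarrow> ('v list \<times> 'v list) set \<Rightarrow> bool" where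
  "is_matching V E M \<longleftrightarrow> (\<forall>(a, b)\<in>M. gamma_edge V E a b) \<and>
     (\<forall>e1\<in>M. \<forall>e2\<in>M. e1 \<noteq> e2 \<longrightarrow> {fst e1, snd e1} \<inter> {fst e2, snd e2} = {})"

datatype 'v mstate = Unmatched | Ins nat 'v | Del nat

fun has_state :: "('v list \<times> 'v list) set \<Rightarrow> 'v list \<Rightarrow> 'v mstate \<Rightarrow> bool" where
  "has_state M x Unmatched \<longleftrightarrow> (\<forall>y. (x, y) \<notin> M \<and> (y, x) \<notin> M)"
| "has_state M x (Ins i v) \<longleftrightarrow> (ins_after i v x, x) \<in> M"
| "has_state M x (Del i) \<longleftrightarrow> (x, del_at i x) \<in> M"

definition prefix_matching :: "'v set \<Rightarrow> ('v \<Rightarrow> 'v \<Rightarrow> bool) \<Rightarrow> ('v list \<times> 'v list) set \<Rightarrow> bool" where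
  "prefix_matching V E M \<longleftrightarrow> is_matching V E M \<and>
     (\<forall>x i v y. is_seq V x \<and> has_state M x (Ins i v) \<and> is_seq V y \<and> take (i + 2) y = take (i + 2) x
        \<longrightarrow> has_state M y (Ins i v)) \<and>
     (\<forall>x i y. is_seq V x \<and> has_state M x (Del i) \<and> is_seq V y \<and> take (i + 2) y = take (i + 2) x
        \<longrightarrow> has_state M y (Del i))"

datatype 'v rule_val = Eps | Iota 'v | Delta

definition generates :: "'v set \<Rightarrow> ('v \<Rightarrow> 'v \<Rightarrow> bool) \<Rightarrow> ('v list \<Rightarrow> 'v rule_val)
    \<Rightarrow> ('v list \<times> 'v list) set \<Rightarrow> bool" where
  "generates V E F M \<longleftrightarrow> prefix_matching V E M \<and>
     (\<forall>x. is_seq V x \<and> 2 \<le> length x \<and> has_state M (butlast x) Unmatched \<longrightarrow>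
        (\<forall>v. has_state M x (Ins (length x - 2) v) \<longleftrightarrow> F x = Iota v) \<and>
        (has_state M x (Del (length x - 2)) \<longleftrightarrow> F x = Delta))"

text \<open>For x = (x_0,...,x_k): k = length x - 1, so x_{k-1} = x ! (length x - 2) etc.\<close>
definition valid_rule :: "'v set \<Rightarrow> ('v \<Rightarrow> 'v \<Rightarrow> bool) \<Rightarrow> ('v list \<Rightarrow> 'v rule_val) \<Rightarrow> bool" where
  "valid_rule V E F \<longleftrightarrow>
     (\<forall>x v. is_seq V x \<and> F x = Iota v \<longrightarrow>
        2 \<le> length x \<and> v \<in> V \<and> v \<noteq> x ! (length x - 2) \<and> v \<noteq> last x \<and>
        gdist E (x ! (length x - 2)) v + gdist E v (last x) = gdist E (x ! (length x - 2)) (last x) \<and>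
        F (butlast x @ [v]) = Eps \<and> F (butlast x @ [v, last x]) = Delta) \<and>
     (\<forall>x. is_seq V x \<and> F x = Delta \<longrightarrow>
        3 \<le> length x \<and>
        gdist E (x ! (length x - 3)) (x ! (length x - 2)) + gdist E (x ! (length x - 2)) (last x)
          = gdist E (x ! (length x - 3)) (last x) \<and>
        F (take (length x - 2) x @ [last x]) = Iota (x ! (length x - 2)))"

definition diagonal_rule :: "'v set \<Rightarrow> ('v \<Rightarrow> 'v \<Rightarrow> bool) \<Rightarrow> ('v list \<Rightarrow> 'v rule_val)
    \<Rightarrow> ('v list \<times> 'v list) set \<Rightarrow> bool" where
  "diagonal_rule V E F M \<longleftrightarrow> valid_rule V E F \<and>
     (\<forall>x. is_seq V x \<and> 2 \<le> length x \<and> has_state M (butlast x) Unmatched \<and>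
        2 \<le> gdist E (x ! (length x - 2)) (last x) \<longrightarrow> F x \<noteq> Eps)"

end

theory Submission
  imports Defs
begin

text \<open>Each step of the cycle replaces a single entry: \<open>a_{i+1}\<close> is \<open>a_i\<close> with \<open>a_{i,d_i}\<close>
  replaced by a vertex \<open>v\<close> with \<open>d(a_{i,d_i-1}, v) \<le> 1\<close>. Indeed, let \<open>x\<close> be the prefix
  \<open>(a_{i,0}, \<dots>, a_{i,d_i-1}, a_{i,d_i+1})\<close> of \<open>b_i\<close>. Its own prefix without the last entry is
  unmatched, because \<open>a_i\<close> is matched by a deletion at a position \<open>\<ge> d_i - 1\<close>; and its last
  step has length \<open>d(a_{i,d_i-1}, a_{i,d_i}) + d(a_{i,d_i}, a_{i,d_i+1}) \<ge> 2\<close>, since deleting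
  \<open>a_{i,d_i}\<close> preserves the length \<open>ell\<close>. So diagonality forces \<open>F(x) \<noteq> \<epsilon>\<close>, the prefix
  property carries the resulting matching of \<open>x\<close> over to \<open>b_i\<close>, where it must be the edge to
  \<open>a_{i+1}\<close>, and validity of \<open>F\<close> bounds \<open>d(a_{i,d_i-1}, v)\<close>.

  Hence the potential \<open>\<Phi>(x) = \<Sum>\<^sub>j ell(x_0, \<dots>, x_{j-1})\<close> changes by
  \<open>d(a_{i,d_i-1}, v) - d(a_{i,d_i-1}, a_{i,d_i}) \<le> 1 - d(a_{i,d_i-1}, a_{i,d_i})\<close> in each step.
  These changes sum to zero around the cycle and every distance is at least 1, so all of the
  distances equal 1.\<close>

lemma ell_Nil [simp]: "ell E [] = 0"
  by (simp add: ell_def)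

lemma ell_singleton [simp]: "ell E [x] = 0"
  by (simp add: ell_def)

lemma ell_Cons_Cons [simp]: "ell E (x # y # zs) = gdist E x y + ell E (y # zs)"
  unfolding ell_def by (simp add: sum.lessThan_Suc_shift del: sum.lessThan_Suc)

lemma ell_append_Cons:
  "xs \<noteq> [] \<Longrightarrow> ell E (xs @ y # ys) = ell E xs + gdist E (last xs) y + ell E (y # ys)"
  by (induction xs rule: induct_list012) auto

lemma nth_del_at:
  "m + 1 < length xs \<Longrightarrow> del_at i xs ! m = (if m < i then xs ! m else xs ! Suc m)"
  unfolding del_at_def by (auto simp: nth_append min_def)

lemma length_del_at: "i < length xs \<Longrightarrow> length (del_at i xs) = length xs - 1"
  unfolding del_at_def by auto

lemma length_ins_after: "length (ins_after i v xs) = length xs + 1"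
  unfolding ins_after_def by auto

lemma ins_after_del_at: "1 \<le> j \<Longrightarrow> j < length xs \<Longrightarrow> ins_after (j - 1) (xs ! j) (del_at j xs) = xs"
  unfolding ins_after_def del_at_def
  by (simp add: min_def) (metis Cons_nth_drop_Suc append_take_drop_id)

lemma take_Suc_append_nth_Cons_drop:
  "d + 1 < length xs \<Longrightarrow> xs = take d xs @ xs ! d # xs ! (d + 1) # drop (d + 2) xs"
  by (metis Cons_nth_drop_Suc Suc_eq_plus1 add_2_eq_Suc' add_lessD1 append_take_drop_id)

lemma last_take_nth: "1 \<le> d \<Longrightarrow> d \<le> length xs \<Longrightarrow> last (take d xs) = xs ! (d - 1)"
  by (cases "take d xs = []") (auto simp: last_conv_nth min_def)

lemma is_seq_take: "is_seq V xs \<Longrightarrow> 1 \<le> m \<Longrightarrow> is_seq V (take m xs)"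
  unfolding is_seq_def by (auto dest: in_set_takeD)

lemma is_seq_snoc: "is_seq V xs \<Longrightarrow> v \<in> V \<Longrightarrow> last xs \<noteq> v \<Longrightarrow> is_seq V (xs @ [v])"
  unfolding is_seq_def
proof (intro conjI allI impI)
  fix i
  assume xs: "xs \<noteq> [] \<and> set xs \<subseteq> V \<and> (\<forall>i. i + 1 < length xs \<longrightarrow> xs ! i \<noteq> xs ! (i + 1))"
    and "last xs \<noteq> v" "i + 1 < length (xs @ [v])"
  then show "(xs @ [v]) ! i \<noteq> (xs @ [v]) ! (i + 1)"
  proof (cases "i + 1 < length xs")
    case False
    then have "i = length xs - 1"
      using \<open>i + 1 < length (xs @ [v])\<close> by simp
    then show ?thesis
      using xs \<open>last xs \<noteq> v\<close> by (simp add: nth_append last_conv_nth)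
  qed (use xs in \<open>simp add: nth_append\<close>)
qed auto

lemma del_at_neq:
  assumes "is_seq V xs" "i < j" "j < length xs"
  shows "del_at i xs \<noteq> del_at j xs"
proof
  assume "del_at i xs = del_at j xs"
  then have "xs ! Suc i = xs ! i"
    using assms(2,3) nth_del_at[of i xs i] nth_del_at[of i xs j] by auto
  then show False
    using assms unfolding is_seq_def by (metis Suc_eq_plus1 Suc_lessI order.strict_trans)
qed

lemma gdist_pos:
  assumes G: "fin_simple_connected_graph V E" and "x \<in> V" "y \<in> V" "x \<noteq> y"
  shows "1 \<le> gdist E x y"
proof (rule ccontr)
  let ?P = "\<lambda>n. \<exists>xs. walk E xs \<and> hd xs = x \<and> last xs = y \<and> length xs = n + 1"
  assume "\<not> 1 \<le> gdist E x y"
  then have "Least ?P = 0"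
    unfolding gdist_def by simp
  obtain xs where xs: "walk E xs" "hd xs = x" "last xs = y"
    using G assms(2,3) unfolding fin_simple_connected_graph_def by blast
  then have "?P (length xs - 1)"
    unfolding walk_def by (intro exI[of _ xs]) auto
  then have "?P (Least ?P)"
    by (rule LeastI)
  then obtain ws where "hd ws = x" "last ws = y" "length ws = 1"
    using \<open>Least ?P = 0\<close> by auto
  then show False
    using assms(4) by (cases ws) auto
qed

lemma gdist_nth_Suc_pos:
  assumes "fin_simple_connected_graph V E" "is_seq V xs" "i + 1 < length xs"
  shows "1 \<le> gdist E (xs ! i) (xs ! Suc i)"
  using assms by (intro gdist_pos) (auto simp: is_seq_def)

lemma ell_del_at:
  assumes "1 \<le> d" "d + 1 < length xs"
  shows "ell E (del_at d xs) + gdist E (xs ! (d - 1)) (xs ! d) + gdist E (xs ! d) (xs ! (d + 1))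
    = ell E xs + gdist E (xs ! (d - 1)) (xs ! (d + 1))"
proof -
  define A C where "A = take d xs" and "C = xs ! (d + 1) # drop (d + 2) xs"
  have A: "A \<noteq> []" "last A = xs ! (d - 1)"
    unfolding A_def using assms by (auto simp: last_take_nth)
  have "xs = A @ xs ! d # C"
    unfolding A_def C_def using take_Suc_append_nth_Cons_drop[OF assms(2)] by simp
  then have "ell E xs = ell E A + gdist E (xs ! (d - 1)) (xs ! d) + gdist E (xs ! d) (xs ! (d + 1)) + ell E C"
    by (metis A C_def ell_Cons_Cons ell_append_Cons group_cancel.add1)
  moreover have "del_at d xs = A @ C"
    unfolding del_at_def A_def C_def using assms(2) by (metis Cons_nth_drop_Suc Suc_eq_plus1 add_2_eq_Suc')
  then have "ell E (del_at d xs) = ell E A + gdist E (xs ! (d - 1)) (xs ! (d + 1)) + ell E C"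
    by (simp add: A C_def ell_append_Cons)
  ultimately show ?thesis
    by simp
qed

lemma gdist_skip_ge_2:
  assumes G: "fin_simple_connected_graph V E" and xs: "is_seq V xs"
    and d: "1 \<le> d" "d + 1 < length xs" and ell_eq: "ell E (del_at d xs) = ell E xs"
  shows "2 \<le> gdist E (xs ! (d - 1)) (xs ! (d + 1))"
proof -
  have "1 \<le> gdist E (xs ! (d - 1)) (xs ! d)"
    using gdist_nth_Suc_pos[OF G xs, of "d - 1"] d by simp
  moreover have "1 \<le> gdist E (xs ! d) (xs ! (d + 1))"
    using gdist_nth_Suc_pos[OF G xs, of d] d by simp
  ultimately show ?thesis
    using ell_del_at[OF d, of E] ell_eq by simp
qed

definition ell_prefix_sum :: "('v \<Rightarrow> 'v \<Rightarrow> bool) \<Rightarrow> nat \<Rightarrow> 'v list \<Rightarrow> nat" where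
  "ell_prefix_sum E K xs = (\<Sum>j<K. ell E (take j xs))"

lemma ell_take_replace:
  assumes A: "A \<noteq> []"
    and geod: "gdist E (last A) w + gdist E w z = gdist E (last A) v + gdist E v z"
  shows "ell E (take j (A @ w # z # C)) + (if j = length A + 1 then gdist E (last A) v else 0)
    = ell E (take j (A @ v # z # C)) + (if j = length A + 1 then gdist E (last A) w else 0)"
proof -
  have "j \<le> length A \<or> j = length A + 1 \<or> (\<exists>t. j = length A + 2 + t)"
    by presburger
  then consider "j \<le> length A" | "j = length A + 1" | t where "j = length A + 2 + t"
    by blast
  then show ?thesis
  proof cases
    case 3
    then have "take j (A @ u # z # C) = A @ u # z # take t C" for u
      by simp
    then show ?thesis
      using 3 geod by (simp add: ell_append_Cons[OF A])
  qed (auto simp: ell_append_Cons[OF A])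
qed

lemma ell_prefix_sum_replace:
  assumes A: "A \<noteq> []" and K: "length A + 1 < K"
    and ell_eq: "ell E (A @ v # z # C) = ell E (A @ w # z # C)"
  shows "ell_prefix_sum E K (A @ w # z # C) + gdist E (last A) v
    = ell_prefix_sum E K (A @ v # z # C) + gdist E (last A) w"
proof -
  have geod: "gdist E (last A) w + gdist E w z = gdist E (last A) v + gdist E v z"
    using ell_eq by (simp add: ell_append_Cons[OF A])
  have "(\<Sum>j<K. ell E (take j (A @ w # z # C)) + (if j = length A + 1 then gdist E (last A) v else 0))
    = (\<Sum>j<K. ell E (take j (A @ v # z # C)) + (if j = length A + 1 then gdist E (last A) w else 0))"
    using ell_take_replace[OF A geod] by (intro sum.cong) auto
  then show ?thesis
    unfolding ell_prefix_sum_def sum.distrib using K by simp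
qed

lemma ell_prefix_sum_replace_nth:
  assumes "1 \<le> d" "d + 1 < length xs" "d + 1 < K"
    and "ell E (take d xs @ v # drop (d + 1) xs) = ell E xs"
  shows "ell_prefix_sum E K xs + gdist E (xs ! (d - 1)) v
    = ell_prefix_sum E K (take d xs @ v # drop (d + 1) xs) + gdist E (xs ! (d - 1)) (xs ! d)"
proof -
  define A z C where "A = take d xs" and "z = xs ! (d + 1)" and "C = drop (d + 2) xs"
  have xs: "xs = A @ xs ! d # z # C"
    unfolding A_def z_def C_def using take_Suc_append_nth_Cons_drop[OF assms(2)] .
  have drop: "drop (d + 1) xs = z # C"
    unfolding z_def C_def using assms(2) by (metis Cons_nth_drop_Suc Suc_eq_plus1 add_2_eq_Suc')
  have A: "A \<noteq> []" "last A = xs ! (d - 1)" "length A + 1 < K"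
    unfolding A_def using assms(1-3) by (auto simp: last_take_nth)
  have "ell E (A @ v # z # C) = ell E (A @ xs ! d # z # C)"
    using assms(4) xs unfolding drop A_def by simp
  from ell_prefix_sum_replace[OF A(1,3) this] show ?thesis
    using xs unfolding drop A_def[symmetric] A(2) by simp
qed

lemma matching_gamma_edge: "is_matching V E M \<Longrightarrow> (x, y) \<in> M \<Longrightarrow> gamma_edge V E x y"
  unfolding is_matching_def by blast

lemma gamma_edge_length: "gamma_edge V E x y \<Longrightarrow> length x = length y + 1"
  unfolding gamma_edge_def by (auto simp: length_del_at)

lemma matching_unique:
  assumes "is_matching V E M" "(x, y) \<in> M" "(x', y') \<in> M"
    and "x = x' \<or> x = y' \<or> y = x' \<or> y = y'"
  shows "x = x' \<and> y = y'"
proof (rule ccontr)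
  assume "\<not> (x = x' \<and> y = y')"
  then have "{x, y} \<inter> {x', y'} = {}"
    using assms(1-3) unfolding is_matching_def by fastforce
  then show False
    using assms(4) by auto
qed

lemma prefix_matching_is_matching: "prefix_matching V E M \<Longrightarrow> is_matching V E M"
  unfolding prefix_matching_def by simp

lemma prefix_matching_del_at:
  assumes "prefix_matching V E M" "is_seq V x" "(x, del_at i x) \<in> M" "is_seq V y"
    and "take (i + 2) y = take (i + 2) x"
  shows "(y, del_at i y) \<in> M"
  using assms has_state.simps(3)[of M _ i] unfolding prefix_matching_def by blast

lemma prefix_matching_ins_after:
  assumes "prefix_matching V E M" "is_seq V x" "(ins_after i v x, x) \<in> M" "is_seq V y"
    and "take (i + 2) y = take (i + 2) x"
  shows "(ins_after i v y, y) \<in> M"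
  using assms has_state.simps(2)[of M _ i v] unfolding prefix_matching_def by blast

text \<open>A matching of such a prefix would propagate to \<open>a\<close> and clash with its deletion at \<open>e\<close>.\<close>

lemma take_unmatched_before_del:
  assumes PM: "prefix_matching V E M" and a: "is_seq V a" "(a, del_at e a) \<in> M" "e + 1 < length a"
    and m: "m \<le> e + 1"
  shows "has_state M (take m a) Unmatched"
proof (rule ccontr)
  have IM: "is_matching V E M"
    using PM by (rule prefix_matching_is_matching)
  assume "\<not> has_state M (take m a) Unmatched"
  then obtain z where "(take m a, z) \<in> M \<or> (z, take m a) \<in> M"
    by auto
  then show False
  proof
    assume del: "(take m a, z) \<in> M"
    then obtain j where j: "1 \<le> j" "j + 1 < length (take m a)" "z = del_at j (take m a)"
      and seq: "is_seq V (take m a)"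
      using matching_gamma_edge[OF IM] unfolding gamma_edge_def by blast
    have "j + 2 \<le> m"
      using j(2) by simp
    then have "take (j + 2) a = take (j + 2) (take m a)"
      by (simp add: min_def)
    then have "(a, del_at j a) \<in> M"
      using prefix_matching_del_at[OF PM seq _ a(1)] del j(3) by simp
    from matching_unique[OF IM this a(2)] have "del_at j a = del_at e a"
      by blast
    moreover have "j < e"
      using j m by simp
    ultimately show False
      using del_at_neq[OF a(1), of j e] a(3) by simp
  next
    assume ins: "(z, take m a) \<in> M"
    then obtain j where j: "1 \<le> j" "j + 1 < length z" "take m a = del_at j z"
      and seq: "is_seq V (take m a)"
      using matching_gamma_edge[OF IM] unfolding gamma_edge_def by blast
    have "length z = length (take m a) + 1"
      using j by (simp add: length_del_at)
    then have "j - 1 + 2 \<le> m"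
      using j(1,2) by simp
    then have "take (j - 1 + 2) a = take (j - 1 + 2) (take m a)"
      by (simp add: min_def)
    moreover have "ins_after (j - 1) (z ! j) (take m a) = z"
      using ins_after_del_at[of j z] j(1,2) unfolding j(3) by simp
    then have "(ins_after (j - 1) (z ! j) (take m a), take m a) \<in> M"
      using ins by simp
    ultimately have "(ins_after (j - 1) (z ! j) a, a) \<in> M"
      using prefix_matching_ins_after[OF PM seq _ a(1)] by blast
    from matching_unique[OF IM this a(2)] have "ins_after (j - 1) (z ! j) a = a"
      by blast
    then have "length a + 1 = length a"
      by (metis length_ins_after)
    then show False
      by simp
  qed
qed

lemma del_position_le:
  assumes PM: "prefix_matching V E M" and a: "is_seq V a" "(a, del_at e a) \<in> M"
    and d: "d < length a" and b: "(a', del_at d a) \<in> M"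
  shows "d \<le> e + 1"
proof (rule ccontr)
  have IM: "is_matching V E M"
    using PM by (rule prefix_matching_is_matching)
  have edge: "gamma_edge V E a' (del_at d a)"
    using IM b by (rule matching_gamma_edge)
  then have seq: "is_seq V (del_at d a)"
    unfolding gamma_edge_def by blast
  assume "\<not> d \<le> e + 1"
  then have "take (e + 2) (del_at d a) = take (e + 2) a"
    unfolding del_at_def by (simp add: min_def)
  with prefix_matching_del_at[OF PM a seq]
  have "(del_at d a, del_at e (del_at d a)) \<in> M"
    by blast
  from matching_unique[OF IM this b] have "del_at d a = a'"
    by blast
  moreover have "length a' = length (del_at d a) + 1"
    using edge by (rule gamma_edge_length)
  ultimately show False
    by simp
qed

text \<open>Validity makes \<open>F\<close> vanish on \<open>(x_0, \<dots>, x_{k-1}, v)\<close>, so diagonality bounds its last step.\<close>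

lemma diagonal_rule_Iota_near:
  assumes diag: "diagonal_rule V E F M" and x: "is_seq V x" "F x = Iota v"
    and unm: "has_state M (butlast x) Unmatched"
  shows "gdist E (x ! (length x - 2)) v \<le> 1"
proof -
  let ?y = "butlast x @ [v]"
  have val: "2 \<le> length x" "v \<in> V" "v \<noteq> x ! (length x - 2)" "F ?y = Eps"
    using diag x unfolding diagonal_rule_def valid_rule_def by blast+
  have "butlast x \<noteq> []"
    using val(1) by (cases x rule: rev_cases) auto
  then have "last (butlast x) = x ! (length x - 2)"
    using val(1) by (simp add: last_conv_nth nth_butlast numeral_2_eq_2)
  then have "is_seq V ?y"
    using is_seq_snoc[of V "butlast x" v] is_seq_take[OF x(1), of "length x - 1"] val(1-3)
    by (simp add: butlast_conv_take)
  moreover have "2 \<le> length ?y" "has_state M (butlast ?y) Unmatched"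
    using val(1) unm by auto
  ultimately have "\<not> 2 \<le> gdist E (?y ! (length ?y - 2)) (last ?y)"
    using diag val(4) unfolding diagonal_rule_def by blast
  moreover have "?y ! (length ?y - 2) = x ! (length x - 2)"
    using val(1) by (auto simp: nth_append nth_butlast numeral_2_eq_2)
  ultimately show ?thesis
    by simp
qed

lemma cycle_step_replaces_entry:
  assumes G: "fin_simple_connected_graph V E" and gen: "generates V E F M"
    and diag: "diagonal_rule V E F M"
    and a: "is_seq V a" "(a, del_at e a) \<in> M" "e + 1 < length a"
    and d: "1 \<le> d" "d + 1 < length a" and ell_eq: "ell E (del_at d a) = ell E a"
    and a': "(a', del_at d a) \<in> M"
  shows "\<exists>v. a' = take d a @ v # drop (d + 1) a \<and> gdist E (a ! (d - 1)) v \<le> 1"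
proof -
  define b where "b = del_at d a"
  define x where "x = take (d + 1) b"
  have PM: "prefix_matching V E M"
    using gen unfolding generates_def by simp
  have IM: "is_matching V E M"
    using PM by (rule prefix_matching_is_matching)
  have edge: "gamma_edge V E a' b"
    unfolding b_def using IM a' by (rule matching_gamma_edge)
  then have b: "is_seq V b"
    unfolding gamma_edge_def by blast
  have x: "x = take d a @ [a ! (d + 1)]"
    unfolding x_def b_def del_at_def using d(2) by (simp add: take_Suc_conv_app_nth min_def)
  have seqx: "is_seq V x" "length x = d + 1"
    using is_seq_take[OF b, of "d + 1"] d(2) x unfolding x_def by auto
  have nth_x: "x ! (length x - 2) = a ! (d - 1)" "last x = a ! (d + 1)"
    using x d by (auto simp: nth_append)
  have "d \<le> e + 1"
    using del_position_le[OF PM a(1,2) _ a'] d(2) by simp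
  then have unm: "has_state M (butlast x) Unmatched"
    using take_unmatched_before_del[OF PM a] x by simp
  have "2 \<le> gdist E (x ! (length x - 2)) (last x)"
    using gdist_skip_ge_2[OF G a(1) d ell_eq] nth_x by simp
  then have "F x \<noteq> Eps"
    using diag seqx unm d(1) unfolding diagonal_rule_def by auto
  moreover have "(\<forall>v. has_state M x (Ins (d - 1) v) \<longleftrightarrow> F x = Iota v)
      \<and> (has_state M x (Del (d - 1)) \<longleftrightarrow> F x = Delta)"
    using gen seqx unm d(1) unfolding generates_def by auto
  moreover have same_prefix: "take (d - 1 + 2) b = take (d - 1 + 2) x"
    unfolding x_def using d(1) by simp
  ultimately consider "(b, del_at (d - 1) b) \<in> M" | v where "(ins_after (d - 1) v b, b) \<in> M" "F x = Iota v"
    using prefix_matching_del_at[OF PM seqx(1) _ b same_prefix]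
      prefix_matching_ins_after[OF PM seqx(1) _ b same_prefix]
    by (cases "F x") auto
  then show ?thesis
  proof cases
    case 1
    from matching_unique[OF IM this a'[folded b_def]] have "b = a'"
      by blast
    then show ?thesis
      using gamma_edge_length[OF edge] by simp
  next
    case (2 v)
    from matching_unique[OF IM 2(1) a'[folded b_def]] have "a' = ins_after (d - 1) v b"
      by blast
    also have "\<dots> = take d a @ v # drop (d + 1) a"
      unfolding b_def ins_after_def del_at_def using d by (simp add: min_def)
    finally show ?thesis
      using diagonal_rule_Iota_near[OF diag seqx(1) 2(2) unm] nth_x by auto
  qed
qed

lemma cycle_step_ell_prefix_sum:
  assumes G: "fin_simple_connected_graph V E" and gen: "generates V E F M"
    and diag: "diagonal_rule V E F M"
    and a: "is_seq V a" "(a, del_at e a) \<in> M" "e + 1 < length a"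
    and d: "1 \<le> d" "d + 1 < length a" and K: "length a < K"
    and ell_eq: "ell E (del_at d a) = ell E a" "ell E a' = ell E a"
    and a': "(a', del_at d a) \<in> M"
  shows "\<exists>x \<le> 1. ell_prefix_sum E K a + x = ell_prefix_sum E K a' + gdist E (a ! (d - 1)) (a ! d)"
proof -
  obtain v where v: "a' = take d a @ v # drop (d + 1) a" "gdist E (a ! (d - 1)) v \<le> 1"
    using cycle_step_replaces_entry[OF G gen diag a d ell_eq(1) a'] by blast
  have "d + 1 < K"
    using d(2) K by simp
  from ell_prefix_sum_replace_nth[OF d this] show ?thesis
    using v ell_eq(2) by auto
qed

lemma Suc_mod_surj: "i < (p::nat) \<Longrightarrow> \<exists>i'<p. Suc i' mod p = i"
proof (cases i)
  case 0
  then show "i < p \<Longrightarrow> ?thesis"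
    by (intro exI[of _ "p - 1"]) auto
next
  case (Suc j)
  then show "i < p \<Longrightarrow> ?thesis"
    by (intro exI[of _ j]) auto
qed

lemma sum_lessThan_Suc_mod:
  fixes f :: "nat \<Rightarrow> 'a::comm_monoid_add"
  assumes "0 < p"
  shows "(\<Sum>i<p. f (Suc i mod p)) = (\<Sum>i<p. f i)"
proof -
  obtain q where q: "p = Suc q"
    using assms by (cases p) auto
  have "(\<Sum>i<Suc q. f (Suc i mod Suc q)) = (\<Sum>i<q. f (Suc i mod Suc q)) + f 0"
    by simp
  also have "(\<Sum>i<q. f (Suc i mod Suc q)) = (\<Sum>i<q. f (Suc i))"
    by (rule sum.cong) auto
  also have "\<dots> + f 0 = (\<Sum>i<Suc q. f i)"
    by (simp add: sum.lessThan_Suc_shift add.commute del: sum.lessThan_Suc)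
  finally show ?thesis
    using q by simp
qed

lemma cyclic_balance_eq_one:
  fixes f x \<delta> :: "nat \<Rightarrow> nat"
  assumes bal: "\<forall>i<p. f i + x i = f (Suc i mod p) + \<delta> i"
    and x: "\<forall>i<p. x i \<le> 1" and \<delta>: "\<forall>i<p. 1 \<le> \<delta> i" and j: "j < p"
  shows "\<delta> j = 1"
proof (rule ccontr)
  assume "\<delta> j \<noteq> 1"
  then have "2 \<le> \<delta> j"
    using \<delta> j by (metis Suc_1 Suc_leI le_neq_implies_less)
  have "(\<Sum>i<p. f i) + (\<Sum>i<p. x i) = (\<Sum>i<p. f (Suc i mod p)) + (\<Sum>i<p. \<delta> i)"
    using bal by (simp flip: sum.distrib)
  then have "(\<Sum>i<p. x i) = (\<Sum>i<p. \<delta> i)"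
    using sum_lessThan_Suc_mod[of p f] j by simp
  moreover have "(\<Sum>i<p. x i) \<le> (\<Sum>i<p. 1)"
    using x by (intro sum_mono) auto
  moreover have "(\<Sum>i\<in>{..<p} - {j}. 1) \<le> (\<Sum>i\<in>{..<p} - {j}. \<delta> i)"
    using \<delta> by (intro sum_mono) auto
  moreover have "(\<Sum>i<p. \<delta> i) = \<delta> j + (\<Sum>i\<in>{..<p} - {j}. \<delta> i)"
    using j by (simp add: sum.remove)
  ultimately show False
    using \<open>2 \<le> \<delta> j\<close> j by simp
qed

theorem corollary3p9:
  fixes V :: "'v set" and E :: "'v \<Rightarrow> 'v \<Rightarrow> bool"
    and F :: "'v list \<Rightarrow> 'v rule_val" and M :: "('v list \<times> 'v list) set"
    and p k l :: nat and a b :: "nat \<Rightarrow> 'v list" and d :: "nat \<Rightarrow> nat"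
  assumes G: "fin_simple_connected_graph V E"
    and gen: "generates V E F M"
    and diag: "diagonal_rule V E F M"
    and p: "1 \<le> p"
    and a_seq: "\<forall>i<p. is_seq V (a i) \<and> length (a i) = k + 1 \<and> ell E (a i) = l"
    and b_seq: "\<forall>i<p. is_seq V (b i) \<and> length (b i) = k \<and> ell E (b i) = l"
    and ab_edge: "\<forall>i<p. gamma_edge V E (a i) (b i) \<and> (a i, b i) \<notin> M"
    and d_pos: "\<forall>i<p. 1 \<le> d i \<and> d i + 1 < length (a i) \<and> b i = del_at (d i) (a i)"
    and ba_edge: "\<forall>i<p. (a (Suc i mod p), b i) \<in> M"
  shows "\<forall>i<p. gdist E (a i ! (d i - 1)) (a i ! d i) = 1"
proof -
  have IM: "is_matching V E M"
    using gen unfolding generates_def prefix_matching_def by simp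
  define \<Phi> where "\<Phi> i = ell_prefix_sum E (k + 2) (a i)" for i
  define \<delta> where "\<delta> i = gdist E (a i ! (d i - 1)) (a i ! d i)" for i
  have "\<exists>x \<le> 1. \<Phi> i + x = \<Phi> (Suc i mod p) + \<delta> i" if i: "i < p" for i
  proof -
    obtain i' where "i' < p" "Suc i' mod p = i"
      using Suc_mod_surj[OF i] by blast
    then have "gamma_edge V E (a i) (b i')" "(a i, b i') \<in> M"
      using ba_edge matching_gamma_edge[OF IM] by auto
    then obtain e where "(a i, del_at e (a i)) \<in> M" "e + 1 < length (a i)"
      unfolding gamma_edge_def by auto
    moreover have "Suc i mod p < p"
      using p by simp
    ultimately show ?thesis
      using cycle_step_ell_prefix_sum[OF G gen diag, of "a i" e "d i" "k + 2" "a (Suc i mod p)"]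
        a_seq b_seq d_pos ba_edge i unfolding \<Phi>_def \<delta>_def by auto
  qed
  then obtain x where x: "\<forall>i<p. x i \<le> 1 \<and> \<Phi> i + x i = \<Phi> (Suc i mod p) + \<delta> i"
    by metis
  have "1 \<le> \<delta> i" if "i < p" for i
    using gdist_nth_Suc_pos[of V E "a i" "d i - 1"] G a_seq d_pos that unfolding \<delta>_def by auto
  then show ?thesis
    using cyclic_balance_eq_one[of p \<Phi> x \<delta>] x unfolding \<delta>_def by blast
qed

end
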